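(* Suppose Assumptions 1 and 2 hold, let $J_0\in B(\mathbb{S}_+^n(\gamma))$ be a constant function, and let $J_k=T^kJ_0$, $\bar J_k=\bar T^kJ_0$, $\hat J_k=\hat T^kJ_0$. Then for every $k=0,1,2,\dots$ and every $P\in\mathbb{S}_+^n(\gamma)$, $J_k(P)\le\bar J_k(P)\le\hat J_k(P)$.
   Context: Fix positive integers $n,m$. Let $A\in\mathbb{R}^{n\times n}$ be Schur stable (every eigenvalue has modulus $<1$), $W\in\mathbb{R}^{n\times n}$ symmetric positive definite, $C\in\mathbb{R}^{m\times n}$ (the $i$-th row corresponds to sensor $i$), and $V\in\mathbb{R}^{m\times m}$ symmetric positive definite. For $S\subseteq\{1,\dots,m\}$, $C_S$ is the submatrix of $C$ formed by the rows indexed by $S$ and $V_S$ the principal submatrix of $V$ with rows and columns indexed by $S$ (with $C_S^\top V_S^{-1}C_S:=0$ when $S=\emptyset$). For $P\succeq 0$ define $f(P,S)=\big((APA^\top+W)^{-1}+C_S^\top V_S^{-1}C_S\big)^{-1}$. Let $g:2^{\{1,\dots,m\}}\to[0,\infty)$ and $c(P,S)=\mathrm{Tr}(P)+g(S)$. Fix a discount factor $0\le\beta<1$ and $\gamma>0$. Let $\mathbb{S}_+^n$ be the $n\times n$ positive semidefinite matrices and $\mathbb{S}_+^n(\gamma)=\{P\in\mathbb{S}_+^n:\mathrm{Tr}(P)\le\gamma\}$. $B(\mathbb{S}_+^n(\gamma))$ is the set of functions $J:\mathbb{S}_+^n(\gamma)\to\mathbb{R}$ with $\|J\|_\infty:=\sup_{P\in\mathbb{S}_+^n(\gamma)}|J(P)|<\infty$.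 Convention: every $J\in B(\mathbb{S}_+^n(\gamma))$ is evaluated as $J(Q)=+\infty$ for $Q\succeq0$ with $\mathrm{Tr}(Q)>\gamma$; minima over $S$ range over all $S\subseteq\{1,\dots,m\}$. Fix a resolution $\epsilon>0$. Let $\mathbb{M}=\{\epsilon P: P\in\mathbb{Z}^{n\times n}\text{ symmetric},\,P\succeq0\}$ and $\mathbb{M}(\gamma)=\{\hat P\in\mathbb{M}:\mathrm{Tr}(\hat P)\le\gamma\}$. Define $\Theta(P)=\epsilon\,\mathrm{round}(P/\epsilon)+\epsilon nI$ (entrywise rounding to the nearest integer) and $\Omega(P)=P+2\epsilon nI$. Operators: $(TJ)(P)=\min_S\{c(P,S)+\beta J(f(P,S))\}$, $(\bar TJ)(P)=\min_S\{c(P,S)+\beta J(\Theta(f(P,S)))\}$, $(\hat TJ)(P)=\min_S\{c(P,S)+\beta J(\Omega(f(P,S)))\}$ for $P\in\mathbb{S}_+^n(\gamma)$. Assumption 1: there exists $\pi:\mathbb{S}_+^n(\gamma)\to2^{\{1,\dots,m\}}$ with $f(P,\pi(P))\in\mathbb{S}_+^n(\gamma)$ for all $P\in\mathbb{S}_+^n(\gamma)$. Assumption 2: for each $P\in\mathbb{S}_+^n(\gamma)$ there exists $S\subseteq\{1,\dots,m\}$ with $\Omega(f(P,S))\in\mathbb{M}(\gamma)$. *)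

theory Defs
  imports "Jordan_Normal_Form.Char_Poly" "Jordan_Normal_Form.DL_Submatrix"
          "HOL-Library.Extended_Real"
begin

(* Matrices are JNF matrices (type real mat) with explicit carriers.
   Sensors are indexed 0..m-1 (row i of C is sensor i). *)

definition mtr :: "real mat \<Rightarrow> real" where
  "mtr P = (\<Sum>i<dim_row P. P $$ (i,i))"

definition psd :: "nat \<Rightarrow> real mat \<Rightarrow> bool" where
  "psd n P \<longleftrightarrow> P \<in> carrier_mat n n \<and> transpose_mat P = P \<and>
     (\<forall>x\<in>carrier_vec n. 0 \<le> x \<bullet> (P *\<^sub>v x))"

definition pd :: "nat \<Rightarrow> real mat \<Rightarrow> bool" where
  "pd n P \<longleftrightarrow> P \<in> carrier_mat n n \<and> transpose_mat P = P \<and>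
     (\<forall>x\<in>carrier_vec n. x \<noteq> 0\<^sub>v n \<longrightarrow> 0 < x \<bullet> (P *\<^sub>v x))"

definition schur_stable :: "nat \<Rightarrow> real mat \<Rightarrow> bool" where
  "schur_stable n A \<longleftrightarrow> A \<in> carrier_mat n n \<and>
     (\<forall>z::complex. eigenvalue (map_mat complex_of_real A) z \<longrightarrow> cmod z < 1)"

definition minv :: "real mat \<Rightarrow> real mat" where
  "minv A = (SOME B. B \<in> carrier_mat (dim_row A) (dim_row A) \<and>
                     A * B = 1\<^sub>m (dim_row A) \<and> B * A = 1\<^sub>m (dim_row A))"

definition info :: "real mat \<Rightarrow> real mat \<Rightarrow> nat set \<Rightarrow> real mat" where
  "info C V S = (if S = {} then 0\<^sub>m (dim_col C) (dim_col C)
     else transpose_mat (submatrix C S UNIV) * minv (submatrix V S S) * submatrix C S UNIV)"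

definition kf :: "real mat \<Rightarrow> real mat \<Rightarrow> real mat \<Rightarrow> real mat \<Rightarrow> nat set \<Rightarrow> real mat \<Rightarrow> real mat" where
  "kf A W C V S P = minv (minv (A * P * transpose_mat A + W) + info C V S)"

definition Sg :: "nat \<Rightarrow> real \<Rightarrow> real mat set" where
  "Sg n \<gamma> = {P. psd n P \<and> mtr P \<le> \<gamma>}"

definition Mg :: "nat \<Rightarrow> real \<Rightarrow> real \<Rightarrow> real mat set" where
  "Mg n \<epsilon> \<gamma> = {Q. (\<exists>Z::int mat. Z \<in> carrier_mat n n \<and> transpose_mat Z = Z \<and>
        psd n (map_mat real_of_int Z) \<and> Q = \<epsilon> \<cdot>\<^sub>m map_mat real_of_int Z) \<and> mtr Q \<le> \<gamma>}"

definition Theta :: "nat \<Rightarrow> real \<Rightarrow> real mat \<Rightarrow> real mat" where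
  "Theta n \<epsilon> P = \<epsilon> \<cdot>\<^sub>m map_mat (\<lambda>x. real_of_int (round (x / \<epsilon>))) P + (\<epsilon> * real n) \<cdot>\<^sub>m 1\<^sub>m n"

definition Omega :: "nat \<Rightarrow> real \<Rightarrow> real mat \<Rightarrow> real mat" where
  "Omega n \<epsilon> P = P + (2 * \<epsilon> * real n) \<cdot>\<^sub>m 1\<^sub>m n"

definition extJ :: "nat \<Rightarrow> real \<Rightarrow> (real mat \<Rightarrow> ereal) \<Rightarrow> real mat \<Rightarrow> ereal" where
  "extJ n \<gamma> J Q = (if Q \<in> Sg n \<gamma> then J Q else \<infinity>)"

definition bellman :: "nat \<Rightarrow> nat \<Rightarrow> real \<Rightarrow> real \<Rightarrow> (nat set \<Rightarrow> real)
     \<Rightarrow> (nat set \<Rightarrow> real mat \<Rightarrow> real mat) \<Rightarrow> (real mat \<Rightarrow> ereal) \<Rightarrow> real mat \<Rightarrow> ereal" where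
  "bellman n m \<gamma> \<beta> g F J P =
     Min ((\<lambda>S. ereal (mtr P + g S) + ereal \<beta> * extJ n \<gamma> J (F S P)) ` Pow {..<m})"

end

theory Submission
  imports Defs
begin

text \<open>Write \<open>X \<preceq> Y\<close> for \<open>psd n (Y - X)\<close>. The Riccati map \<open>P \<mapsto> f(P,S)\<close> is
  \<open>\<preceq>\<close>-monotone: congruence and addition preserve \<open>\<preceq>\<close>, and inversion reverses it on positive
  definite matrices. Rounding moves each entry by at most \<open>\<epsilon>/2\<close>, an error dominated by the
  shift \<open>\<epsilon> n I\<close>, so \<open>X \<preceq> \<Theta>(X) \<preceq> \<Omega>(X)\<close>; with monotonicity, \<open>P \<preceq> Q\<close> gives
  \<open>f(P,S) \<preceq> \<Theta>(f(Q,S))\<close> and \<open>\<Theta>(f(P,S)) \<preceq> \<Omega>(f(Q,S))\<close>. The trace is \<open>\<preceq>\<close>-monotone, so the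
  smaller matrix lies in \<open>S\<^sub>+\<^sup>n(\<gamma>)\<close> whenever the larger one does, and the \<open>+\<infinity>\<close> convention
  never penalises the smaller side. Induction on \<open>k\<close> then gives \<open>J\<^sub>k(P) \<le> bar J\<^sub>k(Q)\<close> and
  \<open>bar J\<^sub>k(P) \<le> hat J\<^sub>k(Q)\<close> whenever \<open>P \<preceq> Q\<close>; take \<open>Q = P\<close>.\<close>

section \<open>Positive (semi)definite matrices\<close>

lemma psdD:
  assumes "psd n P"
  shows "P \<in> carrier_mat n n" "P\<^sup>T = P" "x \<in> carrier_vec n \<Longrightarrow> 0 \<le> x \<bullet> (P *\<^sub>v x)"
  using assms by (auto simp: psd_def)

lemma pdD:
  assumes "pd n P"
  shows "P \<in> carrier_mat n n" "P\<^sup>T = P"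
    "x \<in> carrier_vec n \<Longrightarrow> x \<noteq> 0\<^sub>v n \<Longrightarrow> 0 < x \<bullet> (P *\<^sub>v x)"
  using assms by (auto simp: pd_def)

lemma pd_imp_psd: "pd n P \<Longrightarrow> psd n P"
  unfolding psd_def pd_def
  by (metis less_le_not_le linorder_linear mult_mat_vec_carrier scalar_prod_left_zero)

lemma psd_zero_mat: "psd n (0\<^sub>m n n :: real mat)"
  unfolding psd_def by (auto simp: mult_mat_vec_def scalar_prod_def)

lemma quadratic_form_add:
  fixes A B :: "real mat"
  assumes "A \<in> carrier_mat n n" "B \<in> carrier_mat n n" "x \<in> carrier_vec n"
  shows "x \<bullet> ((A + B) *\<^sub>v x) = x \<bullet> (A *\<^sub>v x) + x \<bullet> (B *\<^sub>v x)"
  using assms by (simp add: add_mult_distrib_mat_vec scalar_prod_add_distrib[of x n])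

lemma psd_add: "psd n A \<Longrightarrow> psd n B \<Longrightarrow> psd n (A + B)"
  unfolding psd_def by (auto simp: quadratic_form_add transpose_add)

lemma pd_add_psd: "pd n A \<Longrightarrow> psd n B \<Longrightarrow> pd n (A + B)"
  unfolding psd_def pd_def by (auto simp: quadratic_form_add transpose_add add_pos_nonneg)

lemma psd_add_pd: "psd n A \<Longrightarrow> pd n B \<Longrightarrow> pd n (A + B)"
  using pd_add_psd[of n B A] comm_add_mat[of A n n B] by (auto simp: psd_def pd_def)

lemma psd_upward_closed:
  assumes "psd n X" "psd n (Y - X)" "Y \<in> carrier_mat n n"
  shows "psd n Y"
proof -
  have "Y = X + (Y - X)"
    using assms psdD(1) by (intro eq_matI) auto
  then show ?thesis using psd_add[OF assms(1,2)] by simp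
qed

lemma psd_diff_trans:
  fixes X Y Z :: "real mat"
  assumes "X \<in> carrier_mat n n" "Y \<in> carrier_mat n n" "Z \<in> carrier_mat n n"
    and "psd n (Y - X)" "psd n (Z - Y)"
  shows "psd n (Z - X)"
proof -
  have "Z - X = (Z - Y) + (Y - X)"
    using assms by (intro eq_matI) auto
  then show ?thesis using psd_add[OF assms(5,4)] by simp
qed

lemma add_mat_diff_cancel_right:
  fixes X Y Z :: "'a :: ab_group_add mat"
  assumes "X \<in> carrier_mat n n" "Y \<in> carrier_mat n n" "Z \<in> carrier_mat n n"
  shows "(X + Z) - (Y + Z) = X - Y"
  using assms by (intro eq_matI) auto

lemma congruence_symmetric:
  fixes B M :: "real mat"
  assumes "B \<in> carrier_mat k n" "M \<in> carrier_mat n n" "M\<^sup>T = M"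
  shows "(B * M * B\<^sup>T)\<^sup>T = B * M * B\<^sup>T"
proof -
  have "(B * M * B\<^sup>T)\<^sup>T = (B\<^sup>T)\<^sup>T * (B * M)\<^sup>T"
    using assms by (intro transpose_mult[of _ k n _ k]) auto
  also have "\<dots> = B * (M * B\<^sup>T)"
    by (simp only: transpose_transpose transpose_mult[OF assms(1,2)] assms(3))
  also have "\<dots> = B * M * B\<^sup>T"
    using assms by (simp add: assoc_mult_mat[of B k n M n _ k])
  finally show ?thesis .
qed

lemma congruence_quadratic_form:
  fixes B M :: "real mat"
  assumes B: "B \<in> carrier_mat k n" and M: "M \<in> carrier_mat n n" and x: "x \<in> carrier_vec k"
  shows "x \<bullet> (B * M * B\<^sup>T *\<^sub>v x) = (B\<^sup>T *\<^sub>v x) \<bullet> (M *\<^sub>v (B\<^sup>T *\<^sub>v x))"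
proof -
  have "B * M * B\<^sup>T *\<^sub>v x = B *\<^sub>v (M *\<^sub>v (B\<^sup>T *\<^sub>v x))"
    using B M x by (simp add: assoc_mult_mat_vec[of _ k n _ k])
  then show ?thesis
    using B M x transpose_vec_mult_scalar[OF B _ x, of "M *\<^sub>v (B\<^sup>T *\<^sub>v x)"] by simp
qed

lemma psd_congruence:
  assumes M: "psd n M" and B: "B \<in> carrier_mat k n"
  shows "psd k (B * M * B\<^sup>T)"
  unfolding psd_def
proof (intro conjI ballI)
  show "B * M * B\<^sup>T \<in> carrier_mat k k" using psdD(1)[OF M] B by auto
  show "(B * M * B\<^sup>T)\<^sup>T = B * M * B\<^sup>T" by (rule congruence_symmetric[OF B psdD(1,2)[OF M]])
  fix x :: "real vec" assume x: "x \<in> carrier_vec k"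
  show "0 \<le> x \<bullet> (B * M * B\<^sup>T *\<^sub>v x)"
    unfolding congruence_quadratic_form[OF B psdD(1)[OF M] x] using psdD(3)[OF M] B x by simp
qed

lemma pd_congruence:
  assumes M: "pd n M" and B: "B \<in> carrier_mat k n"
    and inj: "\<And>x. x \<in> carrier_vec k \<Longrightarrow> B\<^sup>T *\<^sub>v x = 0\<^sub>v n \<Longrightarrow> x = 0\<^sub>v k"
  shows "pd k (B * M * B\<^sup>T)"
  unfolding pd_def
proof (intro conjI ballI impI)
  show "B * M * B\<^sup>T \<in> carrier_mat k k" using pdD(1)[OF M] B by auto
  show "(B * M * B\<^sup>T)\<^sup>T = B * M * B\<^sup>T" by (rule congruence_symmetric[OF B pdD(1,2)[OF M]])
  fix x :: "real vec" assume x: "x \<in> carrier_vec k" "x \<noteq> 0\<^sub>v k"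
  show "0 < x \<bullet> (B * M * B\<^sup>T *\<^sub>v x)"
    unfolding congruence_quadratic_form[OF B pdD(1)[OF M] x(1)]
    using pdD(3)[OF M, of "B\<^sup>T *\<^sub>v x"] inj[OF x(1)] B x by auto
qed

lemma pd_det_nonzero:
  assumes "pd n P" shows "det P \<noteq> 0"
proof
  assume "det P = 0"
  then obtain v where "v \<in> carrier_vec n" "v \<noteq> 0\<^sub>v n" "P *\<^sub>v v = 0\<^sub>v n"
    using det_0_iff_vec_prod_zero_field[OF pdD(1)[OF assms]] by auto
  then show False using pdD(3)[OF assms] by fastforce
qed

lemma pd_minv_inverse:
  assumes "pd n P"
  shows "minv P \<in> carrier_mat n n" "P * minv P = 1\<^sub>m n" "minv P * P = 1\<^sub>m n"
proof -
  have P: "P \<in> carrier_mat n n" using pdD(1)[OF assms] .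
  obtain B where B: "B \<in> carrier_mat n n" "B * P = 1\<^sub>m n" "P * B = 1\<^sub>m n"
    using det_non_zero_imp_unit[OF P pd_det_nonzero[OF assms], unfolded Units_def, of "()"]
    by (auto simp: ring_mat_def)
  then have "\<exists>B. B \<in> carrier_mat n n \<and> P * B = 1\<^sub>m n \<and> B * P = 1\<^sub>m n" by blast
  from someI_ex[OF this]
  have "minv P \<in> carrier_mat n n \<and> P * minv P = 1\<^sub>m n \<and> minv P * P = 1\<^sub>m n"
    using P by (simp add: minv_def)
  then show "minv P \<in> carrier_mat n n" "P * minv P = 1\<^sub>m n" "minv P * P = 1\<^sub>m n" by auto
qed

lemma pd_solve:
  assumes "pd n P" "x \<in> carrier_vec n"
  shows "minv P *\<^sub>v x \<in> carrier_vec n" "P *\<^sub>v (minv P *\<^sub>v x) = x"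
  using assms pd_minv_inverse[OF assms(1)] pdD(1)[OF assms(1)]
  by (auto simp: assoc_mult_mat_vec[symmetric, of P n n "minv P" n x])

lemma symmetric_quadratic_form_swap:
  fixes M :: "real mat"
  assumes "M \<in> carrier_mat n n" "M\<^sup>T = M" "x \<in> carrier_vec n" "y \<in> carrier_vec n"
  shows "x \<bullet> (M *\<^sub>v y) = y \<bullet> (M *\<^sub>v x)"
  using assms transpose_vec_mult_scalar[of M n n y x] by (simp add: comm_scalar_prod[of _ n])

lemma pd_minv_pd:
  assumes P: "pd n P" shows "pd n (minv P)"
proof -
  note Pc = pdD(1,2)[OF P] and Pi = pd_minv_inverse[OF P]
  have sym: "(minv P)\<^sup>T = minv P"
  proof -
    have left: "(minv P)\<^sup>T * P = 1\<^sub>m n"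
      using transpose_mult[OF Pc(1) Pi(1)] Pi(2) Pc(2) by simp
    have "(minv P)\<^sup>T = (minv P)\<^sup>T * (P * minv P)" using Pi by simp
    also have "\<dots> = ((minv P)\<^sup>T * P) * minv P"
      using Pc Pi by (simp add: assoc_mult_mat[symmetric, of _ n n P n "minv P" n])
    also have "\<dots> = minv P" using left Pi by simp
    finally show ?thesis .
  qed
  show ?thesis unfolding pd_def
  proof (intro conjI ballI impI)
    show "minv P \<in> carrier_mat n n" "(minv P)\<^sup>T = minv P" using Pi sym by auto
    fix x :: "real vec" assume x: "x \<in> carrier_vec n" "x \<noteq> 0\<^sub>v n"
    define y where "y = minv P *\<^sub>v x"
    have y: "y \<in> carrier_vec n" "P *\<^sub>v y = x" using pd_solve[OF P x(1)] y_def by auto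
    then have "y \<noteq> 0\<^sub>v n" using x Pc by auto
    then have "0 < y \<bullet> (P *\<^sub>v y)" by (rule pdD(3)[OF P y(1)])
    also have "y \<bullet> (P *\<^sub>v y) = x \<bullet> (minv P *\<^sub>v x)"
      using y x by (simp add: y_def comm_scalar_prod[of _ n])
    finally show "0 < x \<bullet> (minv P *\<^sub>v x)" .
  qed
qed

text \<open>With \<open>u = P\<inverse>x\<close> and \<open>y = Q\<inverse>x\<close>: \<open>0 \<le> (y-u)\<^sup>TP(y-u) = y\<^sup>TPy - 2y\<^sup>Tx + u\<^sup>Tx\<close> and
  \<open>0 \<le> y\<^sup>T(Q-P)y = y\<^sup>Tx - y\<^sup>TPy\<close>; their sum is \<open>x\<^sup>T(P\<inverse> - Q\<inverse>)x = u\<^sup>Tx - y\<^sup>Tx \<ge> 0\<close>.\<close>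

lemma psd_minv_antimono:
  fixes P Q :: "real mat"
  assumes P: "pd n P" and Q: "pd n Q" and PQ: "psd n (Q - P)"
  shows "psd n (minv P - minv Q)"
  unfolding psd_def
proof (intro conjI ballI)
  note Pc = pdD(1,2)[OF P] and Qc = pdD(1,2)[OF Q]
  note Pi = pdD(1,2)[OF pd_minv_pd[OF P]] and Qi = pdD(1,2)[OF pd_minv_pd[OF Q]]
  show "minv P - minv Q \<in> carrier_mat n n" using Pi Qi by auto
  show "(minv P - minv Q)\<^sup>T = minv P - minv Q"
    using transpose_minus[OF Pi(1) Qi(1)] Pi Qi by simp
  fix x :: "real vec" assume x: "x \<in> carrier_vec n"
  define u where "u = minv P *\<^sub>v x"
  define y where "y = minv Q *\<^sub>v x"
  have u: "u \<in> carrier_vec n" "P *\<^sub>v u = x" using pd_solve[OF P x] u_def by auto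
  have y: "y \<in> carrier_vec n" "Q *\<^sub>v y = x" using pd_solve[OF Q x] y_def by auto
  have "0 \<le> (y - u) \<bullet> (P *\<^sub>v (y - u))"
    using psdD(3)[OF pd_imp_psd[OF P]] u y by simp
  also have "\<dots> = y \<bullet> (P *\<^sub>v y) - y \<bullet> (P *\<^sub>v u) - u \<bullet> (P *\<^sub>v y) + u \<bullet> (P *\<^sub>v u)"
    using Pc u(1) y(1) by (simp add: mult_minus_distrib_mat_vec minus_scalar_prod_distrib
        scalar_prod_minus_distrib[of _ n])
  also have "u \<bullet> (P *\<^sub>v y) = y \<bullet> x"
    using symmetric_quadratic_form_swap[OF Pc u(1) y(1)] u by simp
  finally have 1: "0 \<le> y \<bullet> (P *\<^sub>v y) - 2 * (y \<bullet> x) + u \<bullet> x"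
    using u y x by (simp add: comm_scalar_prod[of u n x])
  have "0 \<le> y \<bullet> ((Q - P) *\<^sub>v y)" using psdD(3)[OF PQ y(1)] .
  also have "\<dots> = y \<bullet> x - y \<bullet> (P *\<^sub>v y)"
    using Pc Qc x y by (simp add: minus_mult_distrib_mat_vec scalar_prod_minus_distrib[of _ n])
  finally have 2: "0 \<le> y \<bullet> x - y \<bullet> (P *\<^sub>v y)" .
  have "x \<bullet> ((minv P - minv Q) *\<^sub>v x) = u \<bullet> x - y \<bullet> x"
    using Pi Qi x u y by (simp add: u_def y_def minus_mult_distrib_mat_vec
        scalar_prod_minus_distrib[of _ n] comm_scalar_prod[of x n])
  then show "0 \<le> x \<bullet> ((minv P - minv Q) *\<^sub>v x)" using 1 2 by linarith
qed

lemma psd_diag_nonneg: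
  assumes M: "psd n M" and i: "i < n"
  shows "0 \<le> M $$ (i,i)"
proof -
  have "unit_vec n i \<bullet> (M *\<^sub>v unit_vec n i) = M $$ (i,i)"
    using psdD(1)[OF M] i by (simp add: scalar_prod_left_unit scalar_prod_right_unit)
  then show ?thesis using psdD(3)[OF M, of "unit_vec n i"] by simp
qed

lemma mtr_mono:
  fixes P Q :: "real mat"
  assumes "P \<in> carrier_mat n n" "Q \<in> carrier_mat n n" "psd n (Q - P)"
  shows "mtr P \<le> mtr Q"
proof -
  have "(\<Sum>i<n. P $$ (i,i)) \<le> (\<Sum>i<n. Q $$ (i,i))"
    using psd_diag_nonneg[OF assms(3)] assms(1,2) by (intro sum_mono) fastforce
  then show ?thesis using assms(1,2) by (simp add: mtr_def)
qed

lemma Sg_downward_closed: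
  assumes "psd n X" "psd n (Y - X)" "Y \<in> Sg n \<gamma>"
  shows "X \<in> Sg n \<gamma>"
  using assms mtr_mono[of X n Y] psdD(1) by (fastforce simp: Sg_def)

section \<open>Principal submatrices and the measurement information\<close>

definition selection_mat :: "nat set \<Rightarrow> nat \<Rightarrow> real mat" where
  "selection_mat S m = mat (card S) m (\<lambda>(i,k). if k = pick S i then 1 else 0)"

lemma pick_inj:
  assumes "i < card S" "j < card S" "pick S i = pick S j" shows "i = j"
  using pick_mono[of j S i] pick_mono[of i S j] assms by (cases i j rule: linorder_cases) auto

lemma pick_less: "S \<subseteq> {..<m} \<Longrightarrow> i < card S \<Longrightarrow> pick S i < m"
  using pick_in_set[of i S] by auto

lemma submatrix_eq_selection_congruence:
  fixes V :: "real mat"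
  assumes V: "V \<in> carrier_mat m m" and S: "S \<subseteq> {..<m}"
  shows "submatrix V S S = selection_mat S m * V * (selection_mat S m)\<^sup>T"
proof (rule eq_matI)
  have S_eq: "{i. i < m \<and> i \<in> S} = S" using S by auto
  show "dim_row (submatrix V S S) = dim_row (selection_mat S m * V * (selection_mat S m)\<^sup>T)"
    "dim_col (submatrix V S S) = dim_col (selection_mat S m * V * (selection_mat S m)\<^sup>T)"
    using V S_eq by (auto simp: dim_submatrix selection_mat_def)
  fix i j assume "i < dim_row (selection_mat S m * V * (selection_mat S m)\<^sup>T)"
    "j < dim_col (selection_mat S m * V * (selection_mat S m)\<^sup>T)"
  then have i: "i < card S" and j: "j < card S" by (auto simp: selection_mat_def)
  have "(selection_mat S m * V * (selection_mat S m)\<^sup>T) $$ (i,j)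
      = (\<Sum>l<m. (\<Sum>k<m. (if k = pick S i then 1 else 0) * V $$ (k, l)) * (if l = pick S j then 1 else 0))"
    using V i j by (simp add: selection_mat_def scalar_prod_def atLeast0LessThan)
  also have "\<dots> = V $$ (pick S i, pick S j)"
    using pick_less[OF S i] pick_less[OF S j]
    by (simp add: if_distrib[of "\<lambda>x. x * _"] if_distrib[of "\<lambda>x. _ * x"] cong: if_cong)
  also have "\<dots> = submatrix V S S $$ (i,j)"
    using submatrix_index[of i V S j S] V S_eq i j by auto
  finally show "submatrix V S S $$ (i,j) = (selection_mat S m * V * (selection_mat S m)\<^sup>T) $$ (i,j)"
    by simp
qed

lemma selection_mat_transpose_inj:
  assumes S: "S \<subseteq> {..<m}" and x: "x \<in> carrier_vec (card S)"
    and zero: "(selection_mat S m)\<^sup>T *\<^sub>v x = 0\<^sub>v m"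
  shows "x = 0\<^sub>v (card S)"
proof (rule eq_vecI)
  show "dim_vec x = dim_vec (0\<^sub>v (card S))" using x by simp
  fix i assume "i < dim_vec (0\<^sub>v (card S) :: real vec)"
  then have i: "i < card S" by simp
  have "((selection_mat S m)\<^sup>T *\<^sub>v x) $ pick S i
      = (\<Sum>j<card S. (if pick S i = pick S j then 1 else 0) * x $ j)"
    using pick_less[OF S i] x by (simp add: selection_mat_def scalar_prod_def atLeast0LessThan)
  also have "\<dots> = (\<Sum>j<card S. if j = i then x $ j else 0)"
    by (intro sum.cong refl) (use pick_inj[of i S] i in auto)
  also have "\<dots> = x $ i" using i by simp
  finally show "x $ i = 0\<^sub>v (card S) $ i" using zero pick_less[OF S i] i by simp
qed

lemma pd_principal_submatrix:
  assumes V: "pd m V" and S: "S \<subseteq> {..<m}"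
  shows "pd (card S) (submatrix V S S)"
  unfolding submatrix_eq_selection_congruence[OF pdD(1)[OF V] S]
proof (rule pd_congruence[OF V])
  show "selection_mat S m \<in> carrier_mat (card S) m" by (simp add: selection_mat_def)
qed (rule selection_mat_transpose_inj[OF S])

lemma psd_info:
  fixes C V :: "real mat"
  assumes C: "C \<in> carrier_mat m n" and V: "pd m V" and S: "S \<subseteq> {..<m}"
  shows "psd n (info C V S)"
proof (cases "S = {}")
  case True
  then show ?thesis using C psd_zero_mat by (simp add: info_def)
next
  case False
  define D where "D = submatrix C S UNIV"
  have "{i. i < m \<and> i \<in> S} = S" using S by auto
  then have "D \<in> carrier_mat (card S) n"
    using C unfolding D_def carrier_mat_def by (auto simp: dim_submatrix)
  then have "D\<^sup>T \<in> carrier_mat n (card S)" by simp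
  from psd_congruence[OF pd_imp_psd[OF pd_minv_pd[OF pd_principal_submatrix[OF V S]]] this]
  show ?thesis using False by (simp add: info_def D_def)
qed

section \<open>The Riccati map\<close>

context
  fixes n m :: nat and A W C V :: "real mat"
  assumes A: "A \<in> carrier_mat n n" and W: "pd n W" and C: "C \<in> carrier_mat m n" and V: "pd m V"
begin

lemma pd_predicted_covariance: "psd n P \<Longrightarrow> pd n (A * P * A\<^sup>T + W)"
  using psd_add_pd[OF psd_congruence[OF _ A] W] .

lemma pd_kf_information: "psd n P \<Longrightarrow> S \<subseteq> {..<m} \<Longrightarrow> pd n (minv (A * P * A\<^sup>T + W) + info C V S)"
  using pd_add_psd[OF pd_minv_pd[OF pd_predicted_covariance] psd_info[OF C V]] .

lemma pd_kf: "psd n P \<Longrightarrow> S \<subseteq> {..<m} \<Longrightarrow> pd n (kf A W C V S P)"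
  unfolding kf_def by (rule pd_minv_pd[OF pd_kf_information])

lemma kf_mono:
  assumes S: "S \<subseteq> {..<m}" and P: "psd n P" and Q: "psd n Q" and PQ: "psd n (Q - P)"
  shows "psd n (kf A W C V S Q - kf A W C V S P)"
proof -
  note Pc = psdD(1)[OF P] and Qc = psdD(1)[OF Q] and Wc = pdD(1)[OF W]
  have "(A * Q * A\<^sup>T + W) - (A * P * A\<^sup>T + W) = A * Q * A\<^sup>T - A * P * A\<^sup>T"
    using A Pc Qc Wc by (intro add_mat_diff_cancel_right) auto
  also have "\<dots> = (A * Q - A * P) * A\<^sup>T"
    by (rule minus_mult_distrib_mat[symmetric]) (use A Pc Qc in auto)
  also have "A * Q - A * P = A * (Q - P)"
    by (rule mult_minus_distrib_mat[symmetric]) (use A Pc Qc in auto)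
  finally have "psd n ((A * Q * A\<^sup>T + W) - (A * P * A\<^sup>T + W))"
    using psd_congruence[OF PQ A] by simp
  from psd_minv_antimono[OF pd_predicted_covariance[OF P] pd_predicted_covariance[OF Q] this]
  have "psd n ((minv (A * P * A\<^sup>T + W) + info C V S) - (minv (A * Q * A\<^sup>T + W) + info C V S))"
    using pdD(1)[OF pd_minv_pd[OF pd_predicted_covariance[OF P]]] pdD(1)[OF pd_minv_pd[OF pd_predicted_covariance[OF Q]]]
      psdD(1)[OF psd_info[OF C V S]]
    by (simp add: add_mat_diff_cancel_right)
  from psd_minv_antimono[OF pd_kf_information[OF Q S] pd_kf_information[OF P S] this]
  show ?thesis unfolding kf_def .
qed

lemma kf_comparison:
  fixes lower upper :: "real mat \<Rightarrow> real mat"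
  assumes compare: "\<And>X Y. pd n X \<Longrightarrow> pd n Y \<Longrightarrow> psd n (Y - X) \<Longrightarrow> psd n (lower X) \<and> psd n (upper Y - lower X)"
    and S: "S \<subseteq> {..<m}" and P: "P \<in> Sg n \<gamma>" and Q: "Q \<in> Sg n \<gamma>" and PQ: "psd n (Q - P)"
    and GQ: "upper (kf A W C V S Q) \<in> Sg n \<gamma>"
  shows "lower (kf A W C V S P) \<in> Sg n \<gamma> \<and> psd n (upper (kf A W C V S Q) - lower (kf A W C V S P))"
proof -
  have "psd n P" "psd n Q" using P Q by (auto simp: Sg_def)
  with compare[OF pd_kf pd_kf kf_mono] S PQ
  have "psd n (lower (kf A W C V S P))" "psd n (upper (kf A W C V S Q) - lower (kf A W C V S P))"
    by auto
  then show ?thesis using Sg_downward_closed GQ by blast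
qed

end

section \<open>Rounding to the grid\<close>

lemma quadratic_form_double_sum:
  fixes M :: "real mat"
  assumes M: "M \<in> carrier_mat n n" and x: "x \<in> carrier_vec n"
  shows "x \<bullet> (M *\<^sub>v x) = (\<Sum>i<n. \<Sum>j<n. x$i * M$$(i,j) * x$j)"
  using M x by (auto simp: scalar_prod_def atLeast0LessThan sum_distrib_left mult.assoc
      intro!: sum.cong)

lemma perturbed_product_lower_bound:
  fixes a b d e c :: real
  assumes "\<bar>e\<bar> \<le> c"
  shows "a * d * b - c * (a\<^sup>2 + b\<^sup>2) / 2 \<le> a * (d + e) * b"
proof -
  have "\<bar>a * e * b\<bar> = \<bar>e\<bar> * (\<bar>a\<bar> * \<bar>b\<bar>)" by (simp add: abs_mult)
  also have "\<dots> \<le> c * (\<bar>a\<bar> * \<bar>b\<bar>)" using assms by (intro mult_right_mono) auto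
  also have "\<dots> \<le> c * ((a\<^sup>2 + b\<^sup>2) / 2)"
    using assms sum_squares_bound[of "\<bar>a\<bar>" "\<bar>b\<bar>"]
    by (intro mult_left_mono) (auto simp: power2_eq_square abs_mult_self_eq)
  finally have "\<bar>a * e * b\<bar> \<le> c * ((a\<^sup>2 + b\<^sup>2) / 2)" .
  moreover have "a * (d + e) * b = a * d * b + a * e * b" by (simp add: algebra_simps)
  ultimately show ?thesis using abs_ge_minus_self[of "a * e * b"] by linarith
qed

text \<open>Since \<open>|x\<^sub>i x\<^sub>j| \<le> (x\<^sub>i\<^sup>2 + x\<^sub>j\<^sup>2)/2\<close>, the deviation from \<open>d I\<close> lowers \<open>x\<^sup>TMx\<close>
  by at most \<open>c n |x|\<^sup>2\<close>.\<close>

lemma psd_near_scaled_identity: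
  fixes M :: "real mat"
  assumes M: "M \<in> carrier_mat n n" "M\<^sup>T = M"
    and near: "\<And>i j. i < n \<Longrightarrow> j < n \<Longrightarrow> \<bar>M$$(i,j) - (if i = j then d else 0)\<bar> \<le> c"
    and cd: "c * real n \<le> d"
  shows "psd n M"
  unfolding psd_def
proof (intro conjI ballI)
  show "M \<in> carrier_mat n n" "M\<^sup>T = M" using M by auto
  fix x :: "real vec" assume x: "x \<in> carrier_vec n"
  define s where "s = (\<Sum>i<n. (x$i)\<^sup>2)"
  have diagonal: "(\<Sum>i<n. \<Sum>j<n. x$i * (if i = j then d else 0) * x$j) = d * s"
  proof -
    have "(\<Sum>i<n. \<Sum>j<n. x$i * (if i = j then d else 0) * x$j)
        = (\<Sum>i<n. \<Sum>j<n. if i = j then d * (x$i)\<^sup>2 else 0)"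
      by (intro sum.cong refl) (auto simp: power2_eq_square)
    then show ?thesis by (simp add: s_def sum_distrib_left)
  qed
  have spread: "(\<Sum>i<n. \<Sum>j<n. c * ((x$i)\<^sup>2 + (x$j)\<^sup>2) / 2) = c * real n * s"
  proof -
    have "(\<Sum>i<n. \<Sum>j<n. c * ((x$i)\<^sup>2 + (x$j)\<^sup>2) / 2)
        = (\<Sum>i<n. \<Sum>j<n. c / 2 * (x$i)\<^sup>2) + (\<Sum>i<n. \<Sum>j<n. c / 2 * (x$j)\<^sup>2)"
      by (simp add: add_divide_distrib distrib_left sum.distrib)
    also have "\<dots> = c * real n * s"
      by (simp add: s_def sum_distrib_left sum.swap[of _ "{..<n}" "{..<n}"] mult_ac)
    finally show ?thesis .
  qed
  have "0 \<le> (d - c * real n) * s" using cd by (simp add: s_def sum_nonneg)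
  also have "\<dots>
      = (\<Sum>i<n. \<Sum>j<n. x$i * (if i = j then d else 0) * x$j - c * ((x$i)\<^sup>2 + (x$j)\<^sup>2) / 2)"
    using diagonal spread by (simp add: sum_subtractf left_diff_distrib)
  also have "\<dots> \<le> (\<Sum>i<n. \<Sum>j<n. x$i * M$$(i,j) * x$j)"
  proof (intro sum_mono)
    fix i j assume "i \<in> {..<n}" "j \<in> {..<n}"
    with perturbed_product_lower_bound[where a = "x$i" and b = "x$j"
        and d = "if i = j then d else 0", OF near[of i j]]
    show "x$i * (if i = j then d else 0) * x$j - c * ((x$i)\<^sup>2 + (x$j)\<^sup>2) / 2 \<le> x$i * M$$(i,j) * x$j"
      by simp
  qed
  also have "\<dots> = x \<bullet> (M *\<^sub>v x)" using quadratic_form_double_sum[OF M(1) x] by simp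
  finally show "0 \<le> x \<bullet> (M *\<^sub>v x)" .
qed

lemma Theta_carrier: "Theta n \<epsilon> X \<in> carrier_mat n n"
  unfolding Theta_def by auto

lemma Omega_carrier: "X \<in> carrier_mat n n \<Longrightarrow> Omega n \<epsilon> X \<in> carrier_mat n n"
  unfolding Omega_def by auto

lemma Omega_diff: "X \<in> carrier_mat n n \<Longrightarrow> Y \<in> carrier_mat n n \<Longrightarrow> Omega n \<epsilon> Y - Omega n \<epsilon> X = Y - X"
  unfolding Omega_def by (intro eq_matI) auto

lemma symmetric_entry: "X \<in> carrier_mat n n \<Longrightarrow> X\<^sup>T = X \<Longrightarrow> i < n \<Longrightarrow> j < n \<Longrightarrow> X $$ (j, i) = X $$ (i, j)"
  by (metis index_transpose_mat(1) carrier_matD)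

lemma scaled_round_error:
  assumes "0 < \<epsilon>"
  shows "\<bar>\<epsilon> * real_of_int (round (x / \<epsilon>)) - x\<bar> \<le> \<epsilon> / 2"
proof -
  have "\<epsilon> * real_of_int (round (x / \<epsilon>)) - x = \<epsilon> * (real_of_int (round (x / \<epsilon>)) - x / \<epsilon>)"
    using assms by (simp add: field_simps)
  then have "\<bar>\<epsilon> * real_of_int (round (x / \<epsilon>)) - x\<bar> = \<epsilon> * \<bar>real_of_int (round (x / \<epsilon>)) - x / \<epsilon>\<bar>"
    using assms by (simp add: abs_mult)
  also have "\<dots> \<le> \<epsilon> * (1/2)"
    using of_int_round_abs_le[of "x / \<epsilon>"] assms by (intro mult_left_mono) auto
  finally show ?thesis by simp
qed

lemma psd_Theta_minus:
  fixes X :: "real mat"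
  assumes X: "X \<in> carrier_mat n n" "X\<^sup>T = X" and \<epsilon>: "0 < \<epsilon>"
  shows "psd n (Theta n \<epsilon> X - X)"
proof (rule psd_near_scaled_identity[where d = "\<epsilon> * real n" and c = "\<epsilon> / 2"])
  show "Theta n \<epsilon> X - X \<in> carrier_mat n n" using X Theta_carrier by auto
  show "(Theta n \<epsilon> X - X)\<^sup>T = Theta n \<epsilon> X - X"
    using X by (intro eq_matI) (auto simp: Theta_def symmetric_entry[OF X])
  fix i j assume "i < n" "j < n"
  then show "\<bar>(Theta n \<epsilon> X - X) $$ (i,j) - (if i = j then \<epsilon> * real n else 0)\<bar> \<le> \<epsilon> / 2"
    using X scaled_round_error[OF \<epsilon>, of "X $$ (i,j)"] by (cases "i = j") (simp_all add: Theta_def)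
qed (use \<epsilon> in simp)

lemma psd_Omega_minus_Theta:
  fixes X :: "real mat"
  assumes X: "X \<in> carrier_mat n n" "X\<^sup>T = X" and \<epsilon>: "0 < \<epsilon>"
  shows "psd n (Omega n \<epsilon> X - Theta n \<epsilon> X)"
proof (rule psd_near_scaled_identity[where d = "\<epsilon> * real n" and c = "\<epsilon> / 2"])
  show "Omega n \<epsilon> X - Theta n \<epsilon> X \<in> carrier_mat n n" by (rule minus_carrier_mat[OF Theta_carrier])
  show "(Omega n \<epsilon> X - Theta n \<epsilon> X)\<^sup>T = Omega n \<epsilon> X - Theta n \<epsilon> X"
    using X by (intro eq_matI) (auto simp: Theta_def Omega_def symmetric_entry[OF X])
  fix i j assume "i < n" "j < n"
  then show "\<bar>(Omega n \<epsilon> X - Theta n \<epsilon> X) $$ (i,j) - (if i = j then \<epsilon> * real n else 0)\<bar> \<le> \<epsilon> / 2"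
    using X scaled_round_error[OF \<epsilon>, of "X $$ (i,j)"] by (cases "i = j") (simp_all add: Theta_def Omega_def abs_minus_commute)
qed (use \<epsilon> in simp)

lemma Theta_comparison:
  assumes "0 < \<epsilon>" "pd n X" "pd n Y" "psd n (Y - X)"
  shows "psd n X \<and> psd n (Theta n \<epsilon> Y - X)"
  using assms pd_imp_psd psd_diff_trans[OF pdD(1)[OF assms(2)] pdD(1)[OF assms(3)] Theta_carrier]
    psd_Theta_minus[OF pdD(1,2)[OF assms(3)] assms(1)]
  by blast

lemma Omega_Theta_comparison:
  assumes "0 < \<epsilon>" "pd n X" "pd n Y" "psd n (Y - X)"
  shows "psd n (Theta n \<epsilon> X) \<and> psd n (Omega n \<epsilon> Y - Theta n \<epsilon> X)"
proof
  note X = pdD(1,2)[OF assms(2)] and Y = pdD(1)[OF assms(3)]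
  show "psd n (Theta n \<epsilon> X)"
    by (rule psd_upward_closed[OF pd_imp_psd[OF assms(2)] psd_Theta_minus[OF X assms(1)] Theta_carrier])
  have "psd n (Omega n \<epsilon> Y - Omega n \<epsilon> X)" using Omega_diff[OF X(1) Y] assms(4) by simp
  with psd_Omega_minus_Theta[OF X assms(1)]
  show "psd n (Omega n \<epsilon> Y - Theta n \<epsilon> X)"
    using psd_diff_trans[OF Theta_carrier Omega_carrier[OF X(1)] Omega_carrier[OF Y]] by blast
qed

section \<open>Comparison of Bellman operators\<close>

lemma bellman_mono:
  fixes F1 F2 :: "nat set \<Rightarrow> real mat \<Rightarrow> real mat" and J1 J2 :: "real mat \<Rightarrow> ereal"
  assumes \<beta>: "0 \<le> \<beta>"
    and J: "\<And>P Q. P \<in> Sg n \<gamma> \<Longrightarrow> Q \<in> Sg n \<gamma> \<Longrightarrow> psd n (Q - P) \<Longrightarrow> J1 P \<le> J2 Q"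
    and F: "\<And>S P Q. S \<subseteq> {..<m} \<Longrightarrow> P \<in> Sg n \<gamma> \<Longrightarrow> Q \<in> Sg n \<gamma> \<Longrightarrow> psd n (Q - P)
               \<Longrightarrow> F2 S Q \<in> Sg n \<gamma> \<Longrightarrow> F1 S P \<in> Sg n \<gamma> \<and> psd n (F2 S Q - F1 S P)"
    and P: "P \<in> Sg n \<gamma>" and Q: "Q \<in> Sg n \<gamma>" and PQ: "psd n (Q - P)"
  shows "bellman n m \<gamma> \<beta> g F1 J1 P \<le> bellman n m \<gamma> \<beta> g F2 J2 Q"
proof -
  define cost1 where "cost1 S = ereal (mtr P + g S) + ereal \<beta> * extJ n \<gamma> J1 (F1 S P)" for S
  define cost2 where "cost2 S = ereal (mtr Q + g S) + ereal \<beta> * extJ n \<gamma> J2 (F2 S Q)" for S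
  have "bellman n m \<gamma> \<beta> g F2 J2 Q \<in> cost2 ` Pow {..<m}"
    unfolding bellman_def cost2_def by (intro Min_in) auto
  then obtain S where S: "S \<subseteq> {..<m}" "bellman n m \<gamma> \<beta> g F2 J2 Q = cost2 S" by auto
  have "mtr P \<le> mtr Q"
    using P Q PQ mtr_mono[of P n Q] by (simp add: Sg_def psd_def)
  moreover have "extJ n \<gamma> J1 (F1 S P) \<le> extJ n \<gamma> J2 (F2 S Q)"
    using F[OF S(1) P Q PQ] J by (cases "F2 S Q \<in> Sg n \<gamma>") (auto simp: extJ_def)
  ultimately have "cost1 S \<le> cost2 S"
    unfolding cost1_def cost2_def using \<beta> by (intro add_mono ereal_mult_left_mono) auto
  moreover have "bellman n m \<gamma> \<beta> g F1 J1 P \<le> cost1 S"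
    using S(1) by (auto simp: bellman_def cost1_def)
  ultimately show ?thesis using S(2) by simp
qed

lemma bellman_funpow_mono:
  fixes F1 F2 :: "nat set \<Rightarrow> real mat \<Rightarrow> real mat" and J1 J2 :: "real mat \<Rightarrow> ereal"
  assumes \<beta>: "0 \<le> \<beta>"
    and J: "\<And>P Q. P \<in> Sg n \<gamma> \<Longrightarrow> Q \<in> Sg n \<gamma> \<Longrightarrow> psd n (Q - P) \<Longrightarrow> J1 P \<le> J2 Q"
    and F: "\<And>S P Q. S \<subseteq> {..<m} \<Longrightarrow> P \<in> Sg n \<gamma> \<Longrightarrow> Q \<in> Sg n \<gamma> \<Longrightarrow> psd n (Q - P)
               \<Longrightarrow> F2 S Q \<in> Sg n \<gamma> \<Longrightarrow> F1 S P \<in> Sg n \<gamma> \<and> psd n (F2 S Q - F1 S P)"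
    and "P \<in> Sg n \<gamma>" "Q \<in> Sg n \<gamma>" "psd n (Q - P)"
  shows "(bellman n m \<gamma> \<beta> g F1 ^^ k) J1 P \<le> (bellman n m \<gamma> \<beta> g F2 ^^ k) J2 Q"
  using assms(4-6)
proof (induction k arbitrary: P Q)
  case 0
  then show ?case using J by simp
next
  case (Suc k)
  show ?case
    unfolding funpow.simps comp_def by (rule bellman_mono[OF \<beta> Suc.IH F Suc.prems])
qed

theorem proposition3:
  fixes n m :: nat and A W C V :: "real mat" and g :: "nat set \<Rightarrow> real"
    and \<beta> \<gamma> \<epsilon> c0 :: real and k :: nat and P :: "real mat"
  assumes "0 < n" "0 < m"
    and "schur_stable n A"
    and "W \<in> carrier_mat n n" "pd n W"
    and "C \<in> carrier_mat m n"
    and "V \<in> carrier_mat m m" "pd m V"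
    and "\<forall>S. 0 \<le> g S"
    and "0 \<le> \<beta>" "\<beta> < 1" "0 < \<gamma>" "0 < \<epsilon>"
    and assumption1: "\<exists>\<pi>. \<forall>Q\<in>Sg n \<gamma>. \<pi> Q \<subseteq> {..<m} \<and> kf A W C V (\<pi> Q) Q \<in> Sg n \<gamma>"
    and assumption2: "\<forall>Q\<in>Sg n \<gamma>. \<exists>S\<subseteq>{..<m}. Omega n \<epsilon> (kf A W C V S Q) \<in> Mg n \<epsilon> \<gamma>"
    and "P \<in> Sg n \<gamma>"
  shows "((bellman n m \<gamma> \<beta> g (\<lambda>S Q. kf A W C V S Q)) ^^ k) (\<lambda>_. ereal c0) P
           \<le> ((bellman n m \<gamma> \<beta> g (\<lambda>S Q. Theta n \<epsilon> (kf A W C V S Q))) ^^ k) (\<lambda>_. ereal c0) P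
       \<and> ((bellman n m \<gamma> \<beta> g (\<lambda>S Q. Theta n \<epsilon> (kf A W C V S Q))) ^^ k) (\<lambda>_. ereal c0) P
           \<le> ((bellman n m \<gamma> \<beta> g (\<lambda>S Q. Omega n \<epsilon> (kf A W C V S Q))) ^^ k) (\<lambda>_. ereal c0) P"
proof -
  have A: "A \<in> carrier_mat n n" using \<open>schur_stable n A\<close> by (simp add: schur_stable_def)
  have "P - P = 0\<^sub>m n n" using \<open>P \<in> Sg n \<gamma>\<close> by (intro eq_matI) (auto simp: Sg_def psd_def)
  then have PP: "psd n (P - P)" using psd_zero_mat by simp
  note comparison = kf_comparison[OF A \<open>pd n W\<close> \<open>C \<in> carrier_mat m n\<close> \<open>pd m V\<close>]
  note Theta_step = comparison[OF Theta_comparison[OF \<open>0 < \<epsilon>\<close>]]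
  note Omega_step = comparison[OF Omega_Theta_comparison[OF \<open>0 < \<epsilon>\<close>]]
  show ?thesis
    using \<open>0 \<le> \<beta>\<close> \<open>P \<in> Sg n \<gamma>\<close> PP
    by (intro conjI bellman_funpow_mono[OF _ _ Theta_step] bellman_funpow_mono[OF _ _ Omega_step])
      simp_all
qed

end
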